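(* For any $n\times n$ symmetric matrix $w$ with nonnegative entries and $H=\sum_{i<j}w_{ij}E_{ij}$, \[\lambda_{\max}(H)\le\frac{\sum_{i<j}w_{ij}+\mathrm{LP}(w)}{2},\] where $\mathrm{LP}(w)$ is the optimum of the fractional matching linear program $\max\sum_{i<j}w_{ij}x_{ij}$ subject to $\sum_{j\ne i}x_{ij}\le1$ for all $i\in[n]$ and $x_{ij}\ge0$.
   Context: $E_{ij}$ is the projection onto $\ket{\mathrm{EPR}}=\frac{\ket{00}+\ket{11}}{\sqrt2}$ on qubits $i,j$ tensored with identity elsewhere; $\lambda_{\max}(H)$ is the largest eigenvalue. You may use the star bound: for any $n$-qubit state $\rho$ and $i\in[n]$, $\sum_{j\ne i}\max(0,2\operatorname{tr}(\rho E_{ij})-1)\le1$. *)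

theory Defs
  imports Complex_Main "Jordan_Normal_Form.Matrix" "Jordan_Normal_Form.Char_Poly"
begin

(* Computational basis of n qubits: index b < 2^n; the state of qubit k is bit k of b. *)
definition qbit :: "nat \<Rightarrow> nat \<Rightarrow> nat" where
  "qbit b k = (b div 2 ^ k) mod 2"

(* E_ij = |EPR><EPR| on qubits i,j tensored with the identity on the other qubits,
   where |EPR> = (|00> + |11>)/sqrt 2.  Entry (r,c):
   <r|E_ij|c> = [r_k = c_k for all k other than i,j] * <r_i r_j|EPR><EPR|c_i c_j>,
   and <ab|EPR><EPR|cd> = (1/2) [a = b] [c = d]. *)
definition epr_proj :: "nat \<Rightarrow> nat \<Rightarrow> nat \<Rightarrow> complex mat" where
  "epr_proj n i j = mat (2 ^ n) (2 ^ n) (\<lambda>(r, c).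
     if (\<forall>k<n. k \<noteq> i \<longrightarrow> k \<noteq> j \<longrightarrow> qbit r k = qbit c k)
     then (if qbit r i = qbit r j then 1 / sqrt 2 else 0) * (if qbit c i = qbit c j then 1 / sqrt 2 else 0)
     else 0)"

definition ham :: "nat \<Rightarrow> (nat \<Rightarrow> nat \<Rightarrow> real) \<Rightarrow> complex mat" where
  "ham n w = mat (2 ^ n) (2 ^ n) (\<lambda>(r, c).
     \<Sum>i<n. \<Sum>j\<in>{i<..<n}. complex_of_real (w i j) * epr_proj n i j $$ (r, c))"

(* largest eigenvalue (of a Hermitian matrix, whose eigenvalues are real) *)
definition lambda_max :: "complex mat \<Rightarrow> real" where
  "lambda_max A = Max (Re ` {k. eigenvalue A k})"

(* x is indexed by unordered pairs: x_{ij} for i<j stored as x i j; x_{ji} = x_{ij} *)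
definition frac_matching :: "nat \<Rightarrow> (nat \<Rightarrow> nat \<Rightarrow> real) \<Rightarrow> bool" where
  "frac_matching n x \<longleftrightarrow>
     (\<forall>i<n. \<forall>j<n. i < j \<longrightarrow> x i j \<ge> 0) \<and>
     (\<forall>i<n. (\<Sum>j\<in>{..<n} - {i}. x (min i j) (max i j)) \<le> 1)"

definition LP :: "nat \<Rightarrow> (nat \<Rightarrow> nat \<Rightarrow> real) \<Rightarrow> real" where
  "LP n w = Sup {\<Sum>i<n. \<Sum>j\<in>{i<..<n}. w i j * x i j | x. frac_matching n x}"

end

theory Submission
  imports Defs "Jordan_Normal_Form.Spectral_Radius"
begin

text \<open>
  Let f be an eigenvector of H with eigenvalue k and N = sum_r |f r|^2. Then
  Re k * N = sum_{i<j} w i j <f, E i j f>. Writing <f, E i j f> = (N + y i j) / 2, the star bound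
  sum_{j in S} y i j \<le> N (for i \<notin> S) says exactly that x i j = max 0 (y i j / N) is a fractional
  matching, hence Re k \<le> (sum w i j + sum w i j * x i j) / 2 \<le> (sum w i j + LP w) / 2.

  The star bound is proved for pure states in the computational basis, where y i j is
  2 Re sum cnj (f r) * f (r with bits i, j flipped) over the basis states r with r_i = r_j = 1,
  minus the weight of the basis states with r_i \<noteq> r_j. At a basis state r with r_i = 1, AM-GM
  with weight 1 + #{j \<in> S. r_j = 0} bounds the coherences; flipping the pair i, j moves the
  remaining terms to basis states with r_i = 0, where the mismatch weight pays for them exactly.
\<close>

definition flip_pair :: "nat \<Rightarrow> nat \<Rightarrow> nat \<Rightarrow> nat" where
  "flip_pair i j r = flip_bit i (flip_bit j r)"

lemma bit_flip_pair_iff: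
  "bit (flip_pair i j r) m \<longleftrightarrow> (if m = i \<or> m = j then \<not> bit r m else bit r m)" if "i \<noteq> j"
  using that by (auto simp: flip_pair_def bit_flip_bit_iff)

lemma flip_pair_less:
  assumes "r < 2 ^ n" "i < n" "j < n"
  shows "flip_pair i j r < 2 ^ n"
  using assms by (metis flip_pair_def take_bit_flip_bit_eq take_bit_nat_eq_self_iff leD)

lemma flip_pair_flip_pair [simp]: "flip_pair i j (flip_pair i j r) = r"
  by (rule bit_eqI) (auto simp: flip_pair_def bit_flip_bit_iff)

lemma flip_pair_neq: "i \<noteq> j \<Longrightarrow> flip_pair i j r \<noteq> r"
  by (metis bit_flip_pair_iff)

lemma sum_flip_pair:
  assumes "i < n" "j < n"
  shows "(\<Sum>r<2 ^ n. g (flip_pair i j r)) = (\<Sum>r<2 ^ n. g r)"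
  by (rule sum.reindex_bij_witness[where i="flip_pair i j" and j="flip_pair i j"])
    (auto intro: flip_pair_less assms)

lemma eq_if_bits_below_eq:
  fixes r c :: nat
  assumes "r < 2 ^ n" "c < 2 ^ n" "\<And>m. m < n \<Longrightarrow> bit r m = bit c m"
  shows "r = c"
  by (metis assms bit_eqI bit_take_bit_iff take_bit_nat_eq_self_iff)

lemma qbit_eq_iff: "qbit r k = qbit c m \<longleftrightarrow> (bit r k \<longleftrightarrow> bit c m)"
proof -
  have "qbit b k = (if bit b k then 1 else 0)" for b k
    by (simp add: qbit_def bit_iff_odd odd_iff_mod_2_eq_one)
  then show ?thesis by simp
qed

lemma epr_proj_sym: "epr_proj n i j = epr_proj n j i"
proof -
  have "(\<forall>k<n. k \<noteq> i \<longrightarrow> k \<noteq> j \<longrightarrow> qbit r k = qbit c k) \<longleftrightarrow> (\<forall>k<n. k \<noteq> j \<longrightarrow> k \<noteq> i \<longrightarrow> qbit r k = qbit c k)"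
    for r c by blast
  moreover have "(qbit x i = qbit x j) \<longleftrightarrow> (qbit x j = qbit x i)" for x by (rule eq_commute)
  ultimately show ?thesis
    unfolding epr_proj_def by (intro cong_mat refl) (simp only: prod.case)
qed

lemma agree_off_pair_aligned_iff:
  assumes "r < 2 ^ n" "c < 2 ^ n" "i < n" "j < n" "i \<noteq> j"
  shows "(\<forall>k<n. k \<noteq> i \<longrightarrow> k \<noteq> j \<longrightarrow> (bit r k \<longleftrightarrow> bit c k)) \<and> bit r i = bit r j \<and> bit c i = bit c j
     \<longleftrightarrow> bit r i = bit r j \<and> (c = r \<or> c = flip_pair i j r)"
proof
  assume "(\<forall>k<n. k \<noteq> i \<longrightarrow> k \<noteq> j \<longrightarrow> (bit r k \<longleftrightarrow> bit c k)) \<and> bit r i = bit r j \<and> bit c i = bit c j"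
  then have outside: "\<And>k. k < n \<Longrightarrow> k \<noteq> i \<Longrightarrow> k \<noteq> j \<Longrightarrow> bit c k = bit r k"
    and r_aligned: "bit r i = bit r j" and c_aligned: "bit c i = bit c j" by auto
  show "bit r i = bit r j \<and> (c = r \<or> c = flip_pair i j r)"
  proof (cases "bit c i = bit r i")
    case True
    have "c = r"
    proof (rule eq_if_bits_below_eq[OF assms(2,1)])
      fix m assume "m < n"
      then show "bit c m = bit r m"
        using outside r_aligned c_aligned True by (cases "m = i"; cases "m = j") simp_all
    qed
    then show ?thesis using r_aligned by blast
  next
    case False
    have "c = flip_pair i j r"
    proof (rule eq_if_bits_below_eq[OF assms(2) flip_pair_less[OF assms(1,3,4)]])
      fix m assume "m < n"
      then show "bit c m = bit (flip_pair i j r) m"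
        using outside r_aligned c_aligned False bit_flip_pair_iff[OF assms(5), of r m]
        by (cases "m = i"; cases "m = j") simp_all
    qed
    then show ?thesis using r_aligned by blast
  qed
next
  assume "bit r i = bit r j \<and> (c = r \<or> c = flip_pair i j r)"
  then have r_aligned: "bit r i = bit r j" and c_cases: "c = r \<or> c = flip_pair i j r" by auto
  show "(\<forall>k<n. k \<noteq> i \<longrightarrow> k \<noteq> j \<longrightarrow> (bit r k \<longleftrightarrow> bit c k)) \<and> bit r i = bit r j \<and> bit c i = bit c j"
  proof (intro conjI allI impI r_aligned)
    fix k assume "k < n" "k \<noteq> i" "k \<noteq> j"
    then show "bit r k = bit c k" using c_cases bit_flip_pair_iff[OF assms(5), of r k] by auto
  next
    show "bit c i = bit c j"
      using c_cases r_aligned bit_flip_pair_iff[OF assms(5), of r i] bit_flip_pair_iff[OF assms(5), of r j]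
      by auto
  qed
qed

lemma epr_proj_entry:
  assumes "r < 2 ^ n" "c < 2 ^ n" "i < n" "j < n" "i \<noteq> j"
  shows "epr_proj n i j $$ (r, c) =
    (if bit r i = bit r j \<and> (c = r \<or> c = flip_pair i j r) then 1 / 2 else 0)"
proof -
  have entry: "epr_proj n i j $$ (r, c) = complex_of_real
     (if \<forall>k<n. k \<noteq> i \<longrightarrow> k \<noteq> j \<longrightarrow> qbit r k = qbit c k
      then (if qbit r i = qbit r j then 1 / sqrt 2 else 0) * (if qbit c i = qbit c j then 1 / sqrt 2 else 0)
      else 0)"
    unfolding epr_proj_def using assms(1,2) by (subst index_mat(1)) (simp_all only: prod.case)
  have "(1 / sqrt 2) * (1 / sqrt 2) = (1 / 2 :: real)"
    by (simp add: divide_divide_eq_left)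
  then show ?thesis
    unfolding entry qbit_eq_iff using agree_off_pair_aligned_iff[OF assms, symmetric] by (simp only:) auto
qed

lemma epr_proj_mult_apply:
  assumes "r < 2 ^ n" "i < n" "j < n" "i \<noteq> j"
  shows "(\<Sum>c<2 ^ n. epr_proj n i j $$ (r, c) * f c) =
    (if bit r i = bit r j then (f r + f (flip_pair i j r)) / 2 else 0)"
proof -
  have "(\<Sum>c<2 ^ n. epr_proj n i j $$ (r, c) * f c) =
     (\<Sum>c<2 ^ n. if bit r i = bit r j
        then (if c = r then f c / 2 else 0) + (if c = flip_pair i j r then f c / 2 else 0) else 0)"
    using assms flip_pair_neq[OF assms(4), of r] by (intro sum.cong) (auto simp: epr_proj_entry)
  also have "\<dots> = (if bit r i = bit r j then (f r + f (flip_pair i j r)) / 2 else 0)"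
    using assms flip_pair_less[OF assms(1-3)] by (auto simp: sum.distrib add_divide_distrib)
  finally show ?thesis .
qed

definition sq_norm :: "nat \<Rightarrow> (nat \<Rightarrow> complex) \<Rightarrow> real" where
  "sq_norm n f = (\<Sum>r<2 ^ n. (cmod (f r))\<^sup>2)"

definition epr_form :: "nat \<Rightarrow> (nat \<Rightarrow> complex) \<Rightarrow> nat \<Rightarrow> nat \<Rightarrow> real" where
  "epr_form n f i j = Re (\<Sum>r<2 ^ n. cnj (f r) * (\<Sum>c<2 ^ n. epr_proj n i j $$ (r, c) * f c))"

definition coherence :: "nat \<Rightarrow> (nat \<Rightarrow> complex) \<Rightarrow> nat \<Rightarrow> nat \<Rightarrow> real" where
  "coherence n f i j = Re (\<Sum>r<2 ^ n. if bit r i \<and> bit r j then cnj (f r) * f (flip_pair i j r) else 0)"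

definition mismatch :: "nat \<Rightarrow> (nat \<Rightarrow> complex) \<Rightarrow> nat \<Rightarrow> nat \<Rightarrow> real" where
  "mismatch n f i j = (\<Sum>r<2 ^ n. if bit r i \<noteq> bit r j then (cmod (f r))\<^sup>2 else 0)"

lemma epr_form_sym: "epr_form n f i j = epr_form n f j i"
  by (simp add: epr_form_def epr_proj_sym)

lemma epr_form_decomp:
  assumes "i < n" "j < n" "i \<noteq> j"
  shows "2 * epr_form n f i j = sq_norm n f - mismatch n f i j + 2 * coherence n f i j"
proof -
  let ?g = "\<lambda>r. Re (cnj (f r) * f (flip_pair i j r))"
  have pointwise: "2 * Re (cnj (f r) * (if bit r i = bit r j then (f r + f (flip_pair i j r)) / 2 else 0))
     = (if bit r i = bit r j then (cmod (f r))\<^sup>2 + ?g r else 0)" for r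
  proof -
    have "Re (cnj (f r) * f r) = (cmod (f r))\<^sup>2"
      by (simp add: cmod_power2 flip: power2_eq_square)
    then show ?thesis by (simp add: distrib_left add_divide_distrib)
  qed
  have "2 * epr_form n f i j = (\<Sum>r<2 ^ n. if bit r i = bit r j then (cmod (f r))\<^sup>2 + ?g r else 0)"
    by (simp add: epr_form_def epr_proj_mult_apply assms Re_sum sum_distrib_left flip: pointwise)
  also have "\<dots> = (\<Sum>r<2 ^ n. if bit r i = bit r j then (cmod (f r))\<^sup>2 else 0)
      + (\<Sum>r<2 ^ n. if bit r i \<and> bit r j then ?g r else 0)
      + (\<Sum>r<2 ^ n. if \<not> bit r i \<and> \<not> bit r j then ?g r else 0)"
    unfolding sum.distrib[symmetric] by (rule sum.cong) auto
  also have "(\<Sum>r<2 ^ n. if \<not> bit r i \<and> \<not> bit r j then ?g r else 0)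
      = (\<Sum>r<2 ^ n. if \<not> bit (flip_pair i j r) i \<and> \<not> bit (flip_pair i j r) j then ?g (flip_pair i j r) else 0)"
    by (rule sum_flip_pair[OF assms(1,2), symmetric])
  also have "\<dots> = (\<Sum>r<2 ^ n. if bit r i \<and> bit r j then ?g r else 0)"
    using bit_flip_pair_iff[OF assms(3)] by (intro sum.cong) (auto simp: mult.commute)
  also have "(\<Sum>r<2 ^ n. if bit r i = bit r j then (cmod (f r))\<^sup>2 else 0) = sq_norm n f - mismatch n f i j"
    unfolding sq_norm_def mismatch_def sum_subtractf[symmetric] by (rule sum.cong) auto
  finally show ?thesis
    unfolding coherence_def Re_sum by (simp add: if_distrib[of Re] cong: if_cong)
qed

lemma two_Re_cnj_mult_le:
  assumes "t > 0"
  shows "2 * Re (cnj z * a) \<le> t * (cmod z)\<^sup>2 + (cmod a)\<^sup>2 / t"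
proof -
  have "0 \<le> (t * Re z - Re a)\<^sup>2 + (t * Im z - Im a)\<^sup>2" by simp
  then have "t * (2 * (Re z * Re a + Im z * Im a)) \<le> t * (t * ((Re z)\<^sup>2 + (Im z)\<^sup>2)) + ((Re a)\<^sup>2 + (Im a)\<^sup>2)"
    by (simp add: power2_eq_square algebra_simps)
  also have "\<dots> = t * (t * ((Re z)\<^sup>2 + (Im z)\<^sup>2) + ((Re a)\<^sup>2 + (Im a)\<^sup>2) / t)"
    using assms by (simp add: field_simps)
  finally show ?thesis
    using assms by (simp add: cmod_power2 mult_le_cancel_left_pos)
qed

lemma two_Re_cnj_mult_sum_le:
  assumes "finite J" "t > 0"
  shows "2 * Re (cnj z * (\<Sum>j\<in>J. g j)) \<le> t * (cmod z)\<^sup>2 + real (card J) / t * (\<Sum>j\<in>J. (cmod (g j))\<^sup>2)"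
proof (cases "J = {}")
  case False
  define s where "s = t / real (card J)"
  have "s > 0" using assms False by (simp add: s_def card_gt_0_iff)
  have "2 * Re (cnj z * (\<Sum>j\<in>J. g j)) = (\<Sum>j\<in>J. 2 * Re (cnj z * g j))"
    by (simp add: sum_distrib_left Re_sum)
  also have "\<dots> \<le> (\<Sum>j\<in>J. s * (cmod z)\<^sup>2 + (cmod (g j))\<^sup>2 / s)"
    using \<open>s > 0\<close> by (intro sum_mono two_Re_cnj_mult_le)
  also have "\<dots> = t * (cmod z)\<^sup>2 + real (card J) / t * (\<Sum>j\<in>J. (cmod (g j))\<^sup>2)"
    using assms False by (simp add: s_def sum.distrib sum_divide_distrib[symmetric] sum_distrib_left mult.commute card_gt_0_iff)
  finally show ?thesis .
qed (use assms(2) in simp)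

definition ones_in :: "nat set \<Rightarrow> nat \<Rightarrow> nat" where
  "ones_in S r = card {j \<in> S. bit r j}"

definition zeros_in :: "nat set \<Rightarrow> nat \<Rightarrow> nat" where
  "zeros_in S r = card {j \<in> S. \<not> bit r j}"

lemma sum_if_const:
  assumes "finite S"
  shows "(\<Sum>j\<in>S. if P j then (c :: real) else 0) = c * real (card {j \<in> S. P j})"
  using sum.inter_filter[OF assms, of "\<lambda>_. c" P] by (simp add: mult.commute)

lemma sum_mismatch:
  assumes "finite S"
  shows "(\<Sum>j\<in>S. mismatch n f i j) =
    (\<Sum>r<2 ^ n. (if bit r i then zeros_in S r else ones_in S r) * (cmod (f r))\<^sup>2)"
proof -
  have "(\<Sum>j\<in>S. mismatch n f i j) = (\<Sum>r<2 ^ n. \<Sum>j\<in>S. if bit r i \<noteq> bit r j then (cmod (f r))\<^sup>2 else 0)"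
    unfolding mismatch_def by (rule sum.swap)
  also have "\<dots> = (\<Sum>r<2 ^ n. (if bit r i then zeros_in S r else ones_in S r) * (cmod (f r))\<^sup>2)"
    by (intro sum.cong refl) (simp add: sum_if_const[OF assms] ones_in_def zeros_in_def)
  finally show ?thesis .
qed

lemma ones_zeros_in_flip_pair:
  assumes "finite S" "i \<notin> S" "j \<in> S" "\<not> bit r j"
  shows "ones_in S (flip_pair i j r) = ones_in S r + 1"
    and "zeros_in S (flip_pair i j r) + 1 = zeros_in S r"
proof -
  have "i \<noteq> j" using assms by auto
  then have flipped: "bit (flip_pair i j r) m \<longleftrightarrow> (if m = j then \<not> bit r m else bit r m)" if "m \<in> S" for m
    using bit_flip_pair_iff[of i j r m] assms(2) that by auto
  have "{m \<in> S. bit (flip_pair i j r) m} = insert j {m \<in> S. bit r m}"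
    using flipped assms(3,4) by auto
  then show "ones_in S (flip_pair i j r) = ones_in S r + 1"
    using assms(1,4) by (simp add: ones_in_def)
  have "{m \<in> S. \<not> bit r m} = insert j {m \<in> S. \<not> bit (flip_pair i j r) m}"
    using flipped assms(3,4) by (auto split: if_splits)
  then show "zeros_in S (flip_pair i j r) + 1 = zeros_in S r"
    using assms(1,4) flipped[OF assms(3)] by (simp add: zeros_in_def)
qed

lemma sum_flip_pair_transfer:
  fixes g :: "nat \<Rightarrow> real"
  assumes "i < n" "S \<subseteq> {..<n}" "i \<notin> S" "\<And>r. g r \<ge> 0"
  shows "(\<Sum>r<2 ^ n. if bit r i
            then ones_in S r / (1 + zeros_in S r) * (\<Sum>j\<in>{j \<in> S. bit r j}. g (flip_pair i j r)) else 0)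
       \<le> (\<Sum>r<2 ^ n. if bit r i then 0 else (ones_in S r + 1) * g r)"
proof -
  have "finite S" using assms(2) finite_subset by blast
  let ?q = "\<lambda>r. real (ones_in S r + 1) / zeros_in S r * g r"
  have "(\<Sum>r<2 ^ n. if bit r i
            then ones_in S r / (1 + zeros_in S r) * (\<Sum>j\<in>{j \<in> S. bit r j}. g (flip_pair i j r)) else 0)
      = (\<Sum>r<2 ^ n. \<Sum>j\<in>S. if bit r i \<and> bit r j then ones_in S r / (1 + zeros_in S r) * g (flip_pair i j r) else 0)"
    by (intro sum.cong refl) (auto simp: sum_distrib_left sum.inter_filter[OF \<open>finite S\<close>] intro!: sum.cong)
  also have "\<dots> = (\<Sum>j\<in>S. \<Sum>r<2 ^ n. if bit r i \<and> bit r j then ones_in S r / (1 + zeros_in S r) * g (flip_pair i j r) else 0)"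
    by (rule sum.swap)
  also have "\<dots> = (\<Sum>j\<in>S. \<Sum>r<2 ^ n. if \<not> bit r i \<and> \<not> bit r j then ?q r else 0)"
  proof (rule sum.cong[OF refl])
    fix j assume "j \<in> S"
    then have "j < n" "i \<noteq> j" using assms(2,3) by auto
    have "(\<Sum>r<2 ^ n. if bit r i \<and> bit r j then ones_in S r / (1 + zeros_in S r) * g (flip_pair i j r) else 0)
      = (\<Sum>r<2 ^ n. if bit (flip_pair i j r) i \<and> bit (flip_pair i j r) j
           then ones_in S (flip_pair i j r) / (1 + zeros_in S (flip_pair i j r)) * g (flip_pair i j (flip_pair i j r))
           else 0)"
      by (rule sum_flip_pair[OF assms(1) \<open>j < n\<close>, symmetric])
    also have "\<dots> = (\<Sum>r<2 ^ n. if \<not> bit r i \<and> \<not> bit r j then ?q r else 0)"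
      using bit_flip_pair_iff[OF \<open>i \<noteq> j\<close>] ones_zeros_in_flip_pair[OF \<open>finite S\<close> assms(3) \<open>j \<in> S\<close>]
      by (intro sum.cong refl) (auto simp flip: of_nat_Suc of_nat_add)
    finally show "(\<Sum>r<2 ^ n. if bit r i \<and> bit r j then ones_in S r / (1 + zeros_in S r) * g (flip_pair i j r) else 0)
      = (\<Sum>r<2 ^ n. if \<not> bit r i \<and> \<not> bit r j then ?q r else 0)" .
  qed
  also have "\<dots> = (\<Sum>r<2 ^ n. \<Sum>j\<in>S. if \<not> bit r i \<and> \<not> bit r j then ?q r else 0)"
    by (rule sum.swap)
  also have "\<dots> = (\<Sum>r<2 ^ n. if bit r i then 0 else ?q r * zeros_in S r)"
    by (intro sum.cong refl) (simp add: sum_if_const[OF \<open>finite S\<close>] zeros_in_def)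
  also have "\<dots> \<le> (\<Sum>r<2 ^ n. if bit r i then 0 else (ones_in S r + 1) * g r)"
    using assms(4) by (intro sum_mono) auto
  finally show ?thesis .
qed

lemma sum_coherence_le:
  assumes "i < n" "S \<subseteq> {..<n}" "i \<notin> S"
  shows "2 * (\<Sum>j\<in>S. coherence n f i j)
    \<le> (\<Sum>r<2 ^ n. (if bit r i then 1 + zeros_in S r else ones_in S r + 1) * (cmod (f r))\<^sup>2)"
proof -
  have "finite S" using assms(2) finite_subset by blast
  let ?w = "\<lambda>r. (cmod (f r))\<^sup>2"
  define a where "a r = (\<Sum>j\<in>{j \<in> S. bit r j}. f (flip_pair i j r))" for r
  have "(\<Sum>j\<in>S. coherence n f i j)
      = Re (\<Sum>r<2 ^ n. \<Sum>j\<in>S. if bit r i \<and> bit r j then cnj (f r) * f (flip_pair i j r) else 0)"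
    unfolding coherence_def Re_sum[symmetric] by (subst sum.swap) (rule refl)
  also have "\<dots> = Re (\<Sum>r<2 ^ n. if bit r i then cnj (f r) * a r else 0)"
    unfolding a_def sum_distrib_left sum.inter_filter[OF \<open>finite S\<close>]
    by (intro arg_cong[where f = Re] sum.cong refl) (auto intro!: sum.cong)
  also have "\<dots> = (\<Sum>r<2 ^ n. if bit r i then Re (cnj (f r) * a r) else 0)"
    unfolding Re_sum by (intro sum.cong refl) simp
  finally have "2 * (\<Sum>j\<in>S. coherence n f i j) = 2 * (\<Sum>r<2 ^ n. if bit r i then Re (cnj (f r) * a r) else 0)"
    by simp
  also have "\<dots> = (\<Sum>r<2 ^ n. if bit r i then 2 * Re (cnj (f r) * a r) else 0)"
    unfolding sum_distrib_left by (simp only: if_distrib[of "(*) 2"] mult_zero_right)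
  also have "\<dots> \<le> (\<Sum>r<2 ^ n. if bit r i then (1 + zeros_in S r) * ?w r
      + ones_in S r / (1 + zeros_in S r) * (\<Sum>j\<in>{j \<in> S. bit r j}. ?w (flip_pair i j r)) else 0)"
  proof (intro sum_mono)
    fix r
    have "2 * Re (cnj (f r) * a r) \<le> (1 + zeros_in S r) * ?w r
      + ones_in S r / (1 + zeros_in S r) * (\<Sum>j\<in>{j \<in> S. bit r j}. ?w (flip_pair i j r))"
      unfolding a_def ones_in_def using \<open>finite S\<close> by (intro two_Re_cnj_mult_sum_le) auto
    then show "(if bit r i then 2 * Re (cnj (f r) * a r) else 0) \<le> (if bit r i then (1 + zeros_in S r) * ?w r
      + ones_in S r / (1 + zeros_in S r) * (\<Sum>j\<in>{j \<in> S. bit r j}. ?w (flip_pair i j r)) else 0)"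
      by simp
  qed
  also have "\<dots> = (\<Sum>r<2 ^ n. if bit r i then (1 + zeros_in S r) * ?w r else 0)
      + (\<Sum>r<2 ^ n. if bit r i then ones_in S r / (1 + zeros_in S r) * (\<Sum>j\<in>{j \<in> S. bit r j}. ?w (flip_pair i j r)) else 0)"
    by (simp add: sum.distrib[symmetric] if_distrib cong: if_cong)
  also have "\<dots> \<le> (\<Sum>r<2 ^ n. if bit r i then (1 + zeros_in S r) * ?w r else 0)
      + (\<Sum>r<2 ^ n. if bit r i then 0 else (ones_in S r + 1) * ?w r)"
    using sum_flip_pair_transfer[OF assms, of ?w] by simp
  also have "\<dots> = (\<Sum>r<2 ^ n. (if bit r i then 1 + zeros_in S r else ones_in S r + 1) * ?w r)"
    unfolding sum.distrib[symmetric] by (intro sum.cong refl) simp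
  finally show ?thesis .
qed

lemma epr_star_bound:
  assumes "i < n" "S \<subseteq> {..<n}" "i \<notin> S"
  shows "(\<Sum>j\<in>S. 2 * epr_form n f i j - sq_norm n f) \<le> sq_norm n f"
proof -
  have "finite S" using assms(2) finite_subset by blast
  have "(\<Sum>j\<in>S. 2 * epr_form n f i j - sq_norm n f) = 2 * (\<Sum>j\<in>S. coherence n f i j) - (\<Sum>j\<in>S. mismatch n f i j)"
  proof -
    have "(\<Sum>j\<in>S. 2 * epr_form n f i j - sq_norm n f) = (\<Sum>j\<in>S. 2 * coherence n f i j - mismatch n f i j)"
    proof (rule sum.cong[OF refl])
      fix j assume "j \<in> S"
      then have "j < n" "i \<noteq> j" using assms(2,3) by auto
      then show "2 * epr_form n f i j - sq_norm n f = 2 * coherence n f i j - mismatch n f i j"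
        using epr_form_decomp[OF assms(1)] by simp
    qed
    then show ?thesis by (simp add: sum_subtractf sum_distrib_left)
  qed
  also have "\<dots> \<le> (\<Sum>r<2 ^ n. (if bit r i then 1 + zeros_in S r else ones_in S r + 1) * (cmod (f r))\<^sup>2)
      - (\<Sum>r<2 ^ n. (if bit r i then zeros_in S r else ones_in S r) * (cmod (f r))\<^sup>2)"
    unfolding sum_mismatch[OF \<open>finite S\<close>] using sum_coherence_le[OF assms, of f] by linarith
  also have "\<dots> = sq_norm n f"
    unfolding sq_norm_def sum_subtractf[symmetric] by (intro sum.cong refl) (simp add: algebra_simps)
  finally show ?thesis .
qed

lemma frac_matching_le_one:
  assumes "frac_matching n x" "i < j" "j < n"
  shows "x i j \<le> 1"
proof -
  have nonneg: "\<And>a b. a < n \<Longrightarrow> b < n \<Longrightarrow> a < b \<Longrightarrow> x a b \<ge> 0"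
    and row: "(\<Sum>k\<in>{..<n} - {i}. x (min i k) (max i k)) \<le> 1"
    using assms unfolding frac_matching_def by auto
  have "x (min i j) (max i j) \<le> (\<Sum>k\<in>{..<n} - {i}. x (min i k) (max i k))"
  proof (rule member_le_sum)
    fix k assume "k \<in> {..<n} - {i} - {j}"
    then show "0 \<le> x (min i k) (max i k)"
      using nonneg[of "min i k" "max i k"] assms by (cases "i < k") (auto simp: min_def max_def)
  qed (use assms in auto)
  then show ?thesis using row assms by (simp add: min_def max_def)
qed

lemma sum_le_LP:
  assumes "\<And>i j. i < n \<Longrightarrow> j < n \<Longrightarrow> w i j \<ge> 0" "frac_matching n x"
  shows "(\<Sum>i<n. \<Sum>j\<in>{i<..<n}. w i j * x i j) \<le> LP n w"
  unfolding LP_def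
proof (rule cSup_upper)
  show "(\<Sum>i<n. \<Sum>j\<in>{i<..<n}. w i j * x i j) \<in> {\<Sum>i<n. \<Sum>j\<in>{i<..<n}. w i j * x i j | x. frac_matching n x}"
    using assms(2) by blast
  have "(\<Sum>i<n. \<Sum>j\<in>{i<..<n}. w i j * y i j) \<le> (\<Sum>i<n. \<Sum>j\<in>{i<..<n}. w i j)" if "frac_matching n y" for y
    using assms(1) frac_matching_le_one[OF that] by (intro sum_mono) (simp add: mult_left_le)
  then show "bdd_above {\<Sum>i<n. \<Sum>j\<in>{i<..<n}. w i j * x i j | x. frac_matching n x}"
    by (intro bdd_aboveI) blast
qed

lemma frac_matching_of_state:
  assumes "sq_norm n f > 0"
  shows "frac_matching n (\<lambda>i j. max 0 ((2 * epr_form n f i j - sq_norm n f) / sq_norm n f))"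
  unfolding frac_matching_def
proof (intro conjI allI impI)
  fix i assume "i < n"
  let ?y = "\<lambda>j. 2 * epr_form n f i j - sq_norm n f"
  define S where "S = {j \<in> {..<n} - {i}. ?y j > 0}"
  have "(\<Sum>j\<in>{..<n} - {i}. max 0 ((2 * epr_form n f (min i j) (max i j) - sq_norm n f) / sq_norm n f))
      = (\<Sum>j\<in>{..<n} - {i}. if ?y j > 0 then ?y j / sq_norm n f else 0)"
    using assms by (intro sum.cong refl)
      (auto simp: min_def max_def epr_form_sym[of n f i] zero_less_divide_iff zero_le_divide_iff)
  also have "\<dots> = (\<Sum>j\<in>S. ?y j) / sq_norm n f"
    unfolding S_def sum_divide_distrib by (rule sum.inter_filter[symmetric]) simp
  also have "\<dots> \<le> 1"
    using epr_star_bound[OF \<open>i < n\<close>, of S f] assms by (simp add: S_def subset_eq)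
  finally show "(\<Sum>j\<in>{..<n} - {i}. max 0 ((2 * epr_form n f (min i j) (max i j) - sq_norm n f) / sq_norm n f)) \<le> 1" .
qed simp

lemma ham_mult_vec_index:
  assumes "dim_vec v = 2 ^ n" "r < 2 ^ n"
  shows "(ham n w *\<^sub>v v) $ r
    = (\<Sum>i<n. \<Sum>j\<in>{i<..<n}. of_real (w i j) * (\<Sum>c<2 ^ n. epr_proj n i j $$ (r, c) * v $ c))"
proof -
  have "(ham n w *\<^sub>v v) $ r = (\<Sum>c<2 ^ n. ham n w $$ (r, c) * v $ c)"
    using assms by (simp add: ham_def scalar_prod_def lessThan_atLeast0)
  also have "\<dots> = (\<Sum>c<2 ^ n. \<Sum>i<n. \<Sum>j\<in>{i<..<n}. of_real (w i j) * (epr_proj n i j $$ (r, c) * v $ c))"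
    using assms by (intro sum.cong refl) (simp add: ham_def sum_distrib_right mult.assoc)
  also have "\<dots> = (\<Sum>i<n. \<Sum>j\<in>{i<..<n}. \<Sum>c<2 ^ n. of_real (w i j) * (epr_proj n i j $$ (r, c) * v $ c))"
    by (subst sum.swap) (simp add: sum.swap[of _ "{..<2 ^ n}"])
  finally show ?thesis
    by (simp add: sum_distrib_left)
qed

lemma ham_form:
  assumes "dim_vec v = 2 ^ n"
  shows "Re (\<Sum>r<2 ^ n. cnj (v $ r) * (ham n w *\<^sub>v v) $ r)
    = (\<Sum>i<n. \<Sum>j\<in>{i<..<n}. w i j * epr_form n (($) v) i j)"
proof -
  define E where "E i j r = (\<Sum>c<2 ^ n. epr_proj n i j $$ (r, c) * v $ c)" for i j r
  have "(\<Sum>r<2 ^ n. cnj (v $ r) * (ham n w *\<^sub>v v) $ r)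
      = (\<Sum>r<2 ^ n. \<Sum>i<n. \<Sum>j\<in>{i<..<n}. of_real (w i j) * (cnj (v $ r) * E i j r))"
    using assms by (intro sum.cong refl)
      (simp add: ham_mult_vec_index sum_distrib_left mult.left_commute flip: E_def)
  also have "\<dots> = (\<Sum>i<n. \<Sum>j\<in>{i<..<n}. of_real (w i j) * (\<Sum>r<2 ^ n. cnj (v $ r) * E i j r))"
    by (subst sum.swap) (simp add: sum.swap[of _ "{..<2 ^ n}"] sum_distrib_left)
  finally show ?thesis
    by (simp add: epr_form_def E_def Re_sum)
qed

lemma sq_norm_pos:
  assumes "v \<in> carrier_vec (2 ^ n)" "v \<noteq> 0\<^sub>v (2 ^ n)"
  shows "sq_norm n (($) v) > 0"
proof -
  obtain r where "r < 2 ^ n" "v $ r \<noteq> 0"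
    using assms by (metis carrier_vecD eq_vecI index_zero_vec)
  then have "0 < (cmod (v $ r))\<^sup>2" by simp
  also have "\<dots> \<le> sq_norm n (($) v)"
    unfolding sq_norm_def using \<open>r < 2 ^ n\<close> by (intro member_le_sum) auto
  finally show ?thesis .
qed

lemma eigenvalue_ham_le:
  assumes nonneg: "\<And>i j. i < n \<Longrightarrow> j < n \<Longrightarrow> w i j \<ge> 0"
    and "eigenvector (ham n w) v k"
  shows "Re k \<le> ((\<Sum>i<n. \<Sum>j\<in>{i<..<n}. w i j) + LP n w) / 2"
proof -
  have v: "v \<in> carrier_vec (2 ^ n)" "v \<noteq> 0\<^sub>v (2 ^ n)" "ham n w *\<^sub>v v = k \<cdot>\<^sub>v v"
    using assms(2) unfolding eigenvector_def by (auto simp: ham_def)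
  define N where "N = sq_norm n (($) v)"
  define x where "x i j = max 0 ((2 * epr_form n (($) v) i j - N) / N)" for i j
  have "N > 0" unfolding N_def by (rule sq_norm_pos[OF v(1,2)])
  have "(\<Sum>r<2 ^ n. cnj (v $ r) * (ham n w *\<^sub>v v) $ r) = (\<Sum>r<2 ^ n. k * of_real ((cmod (v $ r))\<^sup>2))"
    using v(1) unfolding v(3) complex_norm_square by (intro sum.cong refl) (simp add: mult.left_commute)
  then have "Re k * N = Re (\<Sum>r<2 ^ n. cnj (v $ r) * (ham n w *\<^sub>v v) $ r)"
    by (simp add: N_def sq_norm_def sum_distrib_left[symmetric])
  also have "\<dots> = (\<Sum>i<n. \<Sum>j\<in>{i<..<n}. w i j * epr_form n (($) v) i j)"
    using v(1) by (intro ham_form) simp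
  also have "\<dots> \<le> (\<Sum>i<n. \<Sum>j\<in>{i<..<n}. w i j * (N * (1 + x i j) / 2))"
  proof (intro sum_mono mult_left_mono)
    fix i j assume "i \<in> {..<n}" "j \<in> {i<..<n}"
    then show "w i j \<ge> 0" using nonneg by simp
    show "epr_form n (($) v) i j \<le> N * (1 + x i j) / 2"
    proof -
      have "2 * epr_form n (($) v) i j - N \<le> N * x i j"
        using \<open>N > 0\<close> by (simp add: x_def max_def pos_divide_le_eq mult.commute zero_le_divide_iff)
      then show ?thesis by (simp add: distrib_left)
    qed
  qed
  also have "\<dots> = N / 2 * ((\<Sum>i<n. \<Sum>j\<in>{i<..<n}. w i j) + (\<Sum>i<n. \<Sum>j\<in>{i<..<n}. w i j * x i j))"
    unfolding sum.distrib[symmetric] sum_distrib_left by (intro sum.cong refl) (simp add: algebra_simps)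
  also have "\<dots> \<le> N / 2 * ((\<Sum>i<n. \<Sum>j\<in>{i<..<n}. w i j) + LP n w)"
    using sum_le_LP[OF nonneg frac_matching_of_state[OF \<open>N > 0\<close>[unfolded N_def]]] \<open>N > 0\<close>
    unfolding N_def x_def by simp
  finally have "N * Re k \<le> N * (((\<Sum>i<n. \<Sum>j\<in>{i<..<n}. w i j) + LP n w) / 2)"
    by (simp add: mult.commute)
  then show ?thesis
    using \<open>N > 0\<close> by (rule mult_left_le_imp_le)
qed

lemma lambda_max_le:
  assumes "A \<in> carrier_mat m m" "m > 0" "\<And>v k. eigenvector A v k \<Longrightarrow> Re k \<le> B"
  shows "lambda_max A \<le> B"
proof -
  have "finite (spectrum A)" "spectrum A \<noteq> {}"
    using card_finite_spectrum[OF assms(1)] spectrum_non_empty[OF assms(1,2)] by auto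
  moreover have "Re k \<le> B" if "k \<in> spectrum A" for k
    using that assms(3) unfolding spectrum_def eigenvalue_def by blast
  ultimately show ?thesis
    by (simp add: lambda_max_def spectrum_def[symmetric])
qed

theorem mainTheorem7:
  fixes n :: nat and w :: "nat \<Rightarrow> nat \<Rightarrow> real"
  assumes "\<And>i j. i < n \<Longrightarrow> j < n \<Longrightarrow> w i j = w j i"
    and "\<And>i j. i < n \<Longrightarrow> j < n \<Longrightarrow> w i j \<ge> 0"
  shows "lambda_max (ham n w) \<le> ((\<Sum>i<n. \<Sum>j\<in>{i<..<n}. w i j) + LP n w) / 2"
proof (rule lambda_max_le)
  show "ham n w \<in> carrier_mat (2 ^ n) (2 ^ n)"
    by (simp add: ham_def)
qed (use eigenvalue_ham_le[OF assms(2)] in auto)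

end
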